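(* Let $\mathbb{F}$ be a field with $\mathrm{char}(\mathbb{F})\neq 2,3$. Every proper ideal of $\hat{\mathcal{H}}$ is contained in the radical $R(\hat{\mathcal{H}})$; in particular, no proper ideal of $\hat{\mathcal{H}}$ contains any of the axes $a_i$, $i\in\mathbb{Z}$.
   Context: Notation: $\mathbb{N}=\{1,2,3,\dots\}$, $3\mathbb{N}=\{3,6,9,\dots\}$; for $r\in\mathbb{Z}$, $\bar r=r+3\mathbb{Z}\in\mathbb{Z}_3$. The algebra $\hat{\mathcal{H}}$ is the commutative $\mathbb{F}$-algebra with basis $\{a_i:i\in\mathbb{Z}\}\cup\{s_j:j\in\mathbb{N}\}\cup\{p_{\bar r,k}:\bar r\in\{\bar1,\bar2\},\ k\in 3\mathbb{N}\}$, where $s_0=0$, $p_{\bar r,j}=0$ for all $\bar r$ whenever $j\notin 3\mathbb{N}$, $p_{\bar 0,j}=-p_{\bar1,j}-p_{\bar2,j}$, $z_{\bar r,j}=p_{\bar r+\bar1,j}-p_{\bar r-\bar1,j}$, and for $i,i'\in\mathbb{Z}$, $j,l\in\mathbb{N}$, $h,k\in3\mathbb{N}$, $\bar r,\bar t\in\mathbb{Z}_3$: (H1) $a_ia_{i'}=\tfrac12(a_i+a_{i'})+s_{|i-i'|}+z_{\bar\imath,|i-i'|}$; (H2) $a_is_j=-\tfrac34a_i+\tfrac38(a_{i-j}+a_{i+j})+\tfrac32 s_j-z_{\bar\imath,j}$; (H3) $a_ip_{\bar r,k}=\tfrac32p_{\bar r,k}-p_{-(\bar\imath+\bar r),k}$;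 (H4) $s_js_l=\tfrac34(s_j+s_l)-\tfrac38(s_{|j-l|}+s_{j+l})$; (H5) $s_jp_{\bar r,k}=\tfrac34(p_{\bar r,j}+p_{\bar r,k})-\tfrac38(p_{\bar r,|j-k|}+p_{\bar r,j+k})$; (H6) $p_{\bar r,h}p_{\bar t,k}=\tfrac14(z_{-(\bar r+\bar t),h}+z_{-(\bar r+\bar t),k})-\tfrac18(z_{-(\bar r+\bar t),|h-k|}+z_{-(\bar r+\bar t),h+k})$. The $a_i$ are the axes of $\hat{\mathcal{H}}$. The radical $R(\hat{\mathcal{H}})$ is the unique largest ideal of $\hat{\mathcal{H}}$ containing none of the axes $a_i$. *)

theory Defs
  imports Main "HOL-Library.Function_Algebras"
begin

text \<open>Basis indices of the algebra H-hat:
  HA i  stands for the axis a_i (i integer),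
  HS j  stands for s_j (only j >= 1 is a basis element),
  HP False k stands for p_{1,k}, HP True k stands for p_{2,k} (only k in 3N is a basis element).\<close>

datatype hidx = HA int | HS nat | HP bool nat

definition valid_idx :: "hidx \<Rightarrow> bool" where
  "valid_idx b = (case b of HA i \<Rightarrow> True | HS j \<Rightarrow> j \<ge> 1 | HP r k \<Rightarrow> k \<ge> 1 \<and> 3 dvd k)"

definition hsupp :: "(hidx \<Rightarrow> 'a::zero) \<Rightarrow> hidx set" where
  "hsupp x = {b. x b \<noteq> 0}"

definition Hcarrier :: "(hidx \<Rightarrow> 'a::field) set" where
  "Hcarrier = {x. finite (hsupp x) \<and> (\<forall>b. x b \<noteq> 0 \<longrightarrow> valid_idx b)}"

definition hscale :: "'a::field \<Rightarrow> (hidx \<Rightarrow> 'a) \<Rightarrow> (hidx \<Rightarrow> 'a)" where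
  "hscale c x = (\<lambda>b. c * x b)"

definition hsingle :: "hidx \<Rightarrow> (hidx \<Rightarrow> 'a::field)" where
  "hsingle b = (\<lambda>c. if c = b then 1 else 0)"

text \<open>The named elements a_i, s_j (s_0 = 0), p_{r,k} (r taken mod 3; zero unless k in 3N;
  p_{0,k} = - p_{1,k} - p_{2,k}) and z_{r,j} = p_{r+1,j} - p_{r-1,j}.\<close>

definition ha :: "int \<Rightarrow> (hidx \<Rightarrow> 'a::field)" where
  "ha i = hsingle (HA i)"

definition hs :: "nat \<Rightarrow> (hidx \<Rightarrow> 'a::field)" where
  "hs j = (if j = 0 then 0 else hsingle (HS j))"

definition hp :: "int \<Rightarrow> nat \<Rightarrow> (hidx \<Rightarrow> 'a::field)" where
  "hp r k = (if k \<ge> 1 \<and> 3 dvd k then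
      (if r mod 3 = 1 then hsingle (HP False k)
       else if r mod 3 = 2 then hsingle (HP True k)
       else - hsingle (HP False k) - hsingle (HP True k))
    else 0)"

definition hz :: "int \<Rightarrow> nat \<Rightarrow> (hidx \<Rightarrow> 'a::field)" where
  "hz r j = hp (r + 1) j - hp (r - 1) j"

definition pidx :: "bool \<Rightarrow> int" where
  "pidx r = (if r then 2 else 1)"

text \<open>Products of basis elements, following (H1)-(H6) (and commutativity).\<close>

fun hmb :: "hidx \<Rightarrow> hidx \<Rightarrow> (hidx \<Rightarrow> 'a::field)" where
  "hmb (HA i) (HA i') =
     hscale (1/2) (ha i + ha i') + hs (nat \<bar>i - i'\<bar>) + hz i (nat \<bar>i - i'\<bar>)"
| "hmb (HA i) (HS j) =
     hscale (-3/4) (ha i) + hscale (3/8) (ha (i - int j) + ha (i + int j))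
     + hscale (3/2) (hs j) - hz i j"
| "hmb (HS j) (HA i) =
     hscale (-3/4) (ha i) + hscale (3/8) (ha (i - int j) + ha (i + int j))
     + hscale (3/2) (hs j) - hz i j"
| "hmb (HA i) (HP r k) = hscale (3/2) (hp (pidx r) k) - hp (- (i + pidx r)) k"
| "hmb (HP r k) (HA i) = hscale (3/2) (hp (pidx r) k) - hp (- (i + pidx r)) k"
| "hmb (HS j) (HS l) =
     hscale (3/4) (hs j + hs l) - hscale (3/8) (hs (nat \<bar>int j - int l\<bar>) + hs (j + l))"
| "hmb (HS j) (HP r k) =
     hscale (3/4) (hp (pidx r) j + hp (pidx r) k)
     - hscale (3/8) (hp (pidx r) (nat \<bar>int j - int k\<bar>) + hp (pidx r) (j + k))"
| "hmb (HP r k) (HS j) =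
     hscale (3/4) (hp (pidx r) j + hp (pidx r) k)
     - hscale (3/8) (hp (pidx r) (nat \<bar>int j - int k\<bar>) + hp (pidx r) (j + k))"
| "hmb (HP r h) (HP t k) =
     hscale (1/4) (hz (- (pidx r + pidx t)) h + hz (- (pidx r + pidx t)) k)
     - hscale (1/8) (hz (- (pidx r + pidx t)) (nat \<bar>int h - int k\<bar>)
                     + hz (- (pidx r + pidx t)) (h + k))"

definition hmul :: "(hidx \<Rightarrow> 'a::field) \<Rightarrow> (hidx \<Rightarrow> 'a) \<Rightarrow> (hidx \<Rightarrow> 'a)" where
  "hmul x y = (\<Sum>b\<in>hsupp x. \<Sum>c\<in>hsupp y. hscale (x b * y c) (hmb b c))"

definition hideal :: "(hidx \<Rightarrow> 'a::field) set \<Rightarrow> bool" where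
  "hideal I \<longleftrightarrow> I \<subseteq> Hcarrier \<and> 0 \<in> I
     \<and> (\<forall>x\<in>I. \<forall>y\<in>I. x + y \<in> I)
     \<and> (\<forall>c. \<forall>x\<in>I. hscale c x \<in> I)
     \<and> (\<forall>x\<in>I. \<forall>y\<in>Hcarrier. hmul x y \<in> I \<and> hmul y x \<in> I)"

definition hradical :: "(hidx \<Rightarrow> 'a::field) set" where
  "hradical = (THE R. hideal R \<and> (\<forall>i. ha i \<notin> R)
      \<and> (\<forall>J. hideal J \<and> (\<forall>i. ha i \<notin> J) \<longrightarrow> J \<subseteq> R))"

end

theory Submission
  imports Defs
begin

text \<open>Let \<open>\<phi>\<close> be the linear functional with \<open>\<phi>(a\<^sub>i) = 1\<close> vanishing on all \<open>s\<^sub>j\<close> and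
  \<open>p\<^sub>r\<^sub>,\<^sub>k\<close>. The structure constants of (H1)--(H6) make \<open>\<phi>\<close> multiplicative, so \<open>ker \<phi>\<close> is
  an ideal containing no axis. Conversely, multiplication by \<open>a\<^sub>i\<close> has the eigenvalues
  \<open>1, 0, 2, 1/2, 5/2\<close> on \<open>\<H>\<close>, with \<open>1\<close>-eigenspace spanned by \<open>a\<^sub>i\<close>; the polynomial
  \<open>t(t - 2)(t - 1/2)(t - 5/2)\<close> in this operator therefore maps every \<open>x\<close> to
  \<open>3/4 \<phi>(x) a\<^sub>i\<close>. Hence an ideal with an element outside \<open>ker \<phi>\<close> contains all axes, and
  from the products \<open>a\<^sub>m a\<^sub>m\<^sub>+\<^sub>d\<close> it then contains every \<open>s\<^sub>d\<close>, \<open>z\<^sub>m\<^sub>,\<^sub>d\<close> and \<open>p\<^sub>r\<^sub>,\<^sub>d\<close>,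
  i.e. all of \<open>\<H>\<close>. So every proper ideal lies in \<open>ker \<phi>\<close>, which is the radical.\<close>

lemma numeral_Bit0_eq_zero_iff:
  assumes "(2::'a::field) \<noteq> 0"
  shows "(numeral (Num.Bit0 n) = (0::'a)) \<longleftrightarrow> numeral n = (0::'a)"
  using assms by (metis mult_2 mult_eq_0_iff numeral_Bit0)

section \<open>Coordinate vectors\<close>

lemma hscale_apply: "hscale c x b = c * x b"
  by (simp add: hscale_def)

lemma hsingle_apply: "hsingle b c = (if c = b then 1 else 0)"
  by (simp add: hsingle_def)

lemma hscale_0_left [simp]: "hscale 0 x = 0"
  by (simp add: fun_eq_iff hscale_apply)

lemma hscale_0_right [simp]: "hscale c 0 = 0"
  by (simp add: fun_eq_iff hscale_apply)

lemma hscale_1 [simp]: "hscale 1 x = x"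
  by (simp add: fun_eq_iff hscale_apply)

lemma hscale_hscale: "hscale a (hscale b x) = hscale (a * b) x"
  by (simp add: fun_eq_iff hscale_apply)

lemma hscale_add_right: "hscale c (x + y) = hscale c x + hscale c y"
  by (simp add: fun_eq_iff hscale_apply algebra_simps)

lemma hscale_add_left: "hscale (a + b) x = hscale a x + hscale b x"
  by (simp add: fun_eq_iff hscale_apply algebra_simps)

lemma hscale_minus_one: "hscale (- 1) x = - x"
  by (simp add: fun_eq_iff hscale_apply)

lemma sum_apply: "sum f A x = (\<Sum>a\<in>A. f a x)"
  by (induction A rule: infinite_finite_induct) auto

lemma hscale_sum: "hscale c (sum f A) = (\<Sum>a\<in>A. hscale c (f a))"
  by (simp add: fun_eq_iff hscale_apply sum_apply sum_distrib_left)

lemma hsupp_zero [simp]: "hsupp (0 :: hidx \<Rightarrow> 'a::zero) = {}"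
  by (simp add: hsupp_def)

lemma hsupp_hsingle [simp]: "hsupp (hsingle b :: hidx \<Rightarrow> 'a::field) = {b}"
  by (auto simp: hsupp_def hsingle_def)

lemma hsupp_add_subset: "hsupp (x + y :: hidx \<Rightarrow> 'a::monoid_add) \<subseteq> hsupp x \<union> hsupp y"
  by (auto simp: hsupp_def)

lemma hsupp_uminus [simp]: "hsupp (- x :: hidx \<Rightarrow> 'a::group_add) = hsupp x"
  by (simp add: hsupp_def)

lemma hsupp_hscale_subset: "hsupp (hscale c x) \<subseteq> hsupp x"
  by (auto simp: hsupp_def hscale_apply)

lemma finite_hsupp_add [simp]:
  "finite (hsupp x) \<Longrightarrow> finite (hsupp y) \<Longrightarrow> finite (hsupp (x + y :: hidx \<Rightarrow> 'a::monoid_add))"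
  by (rule finite_subset[OF hsupp_add_subset]) simp

lemma finite_hsupp_hscale [simp]: "finite (hsupp x) \<Longrightarrow> finite (hsupp (hscale c x))"
  by (rule finite_subset[OF hsupp_hscale_subset])

lemma finite_hsupp_diff [simp]:
  "finite (hsupp x) \<Longrightarrow> finite (hsupp y) \<Longrightarrow> finite (hsupp (x - y :: hidx \<Rightarrow> 'a::group_add))"
  using finite_hsupp_add[of x "- y"] by simp

lemma finite_hsupp_sum:
  "(\<And>a. a \<in> A \<Longrightarrow> finite (hsupp (f a))) \<Longrightarrow> finite (hsupp (sum f A :: hidx \<Rightarrow> 'a::comm_monoid_add))"
  by (induction A rule: infinite_finite_induct) simp_all

lemma Hcarrier_iff: "x \<in> Hcarrier \<longleftrightarrow> finite (hsupp x) \<and> (\<forall>b\<in>hsupp x. valid_idx b)"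
  by (auto simp: Hcarrier_def hsupp_def)

lemma Hcarrier_finite_hsupp [simp]: "x \<in> Hcarrier \<Longrightarrow> finite (hsupp x)"
  by (simp add: Hcarrier_iff)

lemma Hcarrier_zero [simp]: "0 \<in> Hcarrier"
  by (simp add: Hcarrier_iff hsupp_def)

lemma Hcarrier_add [simp]: "x \<in> Hcarrier \<Longrightarrow> y \<in> Hcarrier \<Longrightarrow> x + y \<in> Hcarrier"
  using hsupp_add_subset[of x y] by (auto simp: Hcarrier_iff)

lemma Hcarrier_hscale [simp]: "x \<in> Hcarrier \<Longrightarrow> hscale c x \<in> Hcarrier"
  using hsupp_hscale_subset[of c x] by (auto simp: Hcarrier_iff)

lemma Hcarrier_uminus [simp]: "x \<in> Hcarrier \<Longrightarrow> - x \<in> Hcarrier"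
  by (simp add: Hcarrier_iff)

lemma Hcarrier_diff [simp]: "x \<in> Hcarrier \<Longrightarrow> y \<in> Hcarrier \<Longrightarrow> x - y \<in> Hcarrier"
  using Hcarrier_add[of x "- y"] by simp

lemma Hcarrier_sum: "(\<And>a. a \<in> A \<Longrightarrow> f a \<in> Hcarrier) \<Longrightarrow> sum f A \<in> Hcarrier"
  by (induction A rule: infinite_finite_induct) simp_all

lemma Hcarrier_hsingle [simp]: "valid_idx b \<Longrightarrow> hsingle b \<in> Hcarrier"
  by (simp add: Hcarrier_iff)

lemma hs_0 [simp]: "hs 0 = 0"
  by (simp add: hs_def)

lemma hp_0 [simp]: "hp r 0 = 0"
  by (simp add: hp_def)

lemma hz_0 [simp]: "hz r 0 = 0"
  by (simp add: hz_def)

lemma hp_cong: "r mod 3 = r' mod 3 \<Longrightarrow> hp r k = hp r' k"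
  by (simp add: hp_def)

lemma hp_sum_consecutive: "hp r k + hp (r + 1) k + hp (r + 2) k = (0 :: hidx \<Rightarrow> 'a::field)"
proof -
  consider "r mod 3 = 0" | "r mod 3 = 1" | "r mod 3 = 2"
    by arith
  then show ?thesis
  proof cases
    case 1
    then have "(r + 1) mod 3 = 1" "(r + 2) mod 3 = 2"
      by presburger+
    with 1 show ?thesis
      by (simp add: hp_def)
  next
    case 2
    then have "(r + 1) mod 3 = 2" "(r + 2) mod 3 = 0"
      by presburger+
    with 2 show ?thesis
      by (simp add: hp_def)
  next
    case 3
    then have "(r + 1) mod 3 = 0" "(r + 2) mod 3 = 1"
      by presburger+
    with 3 show ?thesis
      by (simp add: hp_def)
  qed
qed

lemma hp_eq_neg_sum: "hp r k = - hp (r + 1) k - (hp (r + 2) k :: hidx \<Rightarrow> 'a::field)"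
  using hp_sum_consecutive[of r k] by (simp add: eq_neg_iff_add_eq_0 algebra_simps)

lemma hz_sum_residues: "hz 0 d + hz 1 d + (hz 2 d :: hidx \<Rightarrow> 'a::field) = 0"
proof -
  have "hp (- 1) d = (hp 2 d :: hidx \<Rightarrow> 'a)" "hp 3 d = (hp 0 d :: hidx \<Rightarrow> 'a)"
    by (rule hp_cong; simp)+
  then show ?thesis
    using hp_sum_consecutive[of 0 d, where 'a = 'a] by (simp add: hz_def algebra_simps)
qed

lemma Hcarrier_ha [simp]: "ha i \<in> Hcarrier"
  by (simp add: ha_def valid_idx_def)

lemma Hcarrier_hs [simp]: "hs j \<in> Hcarrier"
  by (simp add: hs_def valid_idx_def)

lemma Hcarrier_hp [simp]: "hp r k \<in> Hcarrier"
  by (simp add: hp_def valid_idx_def)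

lemma Hcarrier_hz [simp]: "hz r k \<in> Hcarrier"
  by (simp add: hz_def)

lemma Hcarrier_hmb [simp]: "hmb b c \<in> Hcarrier"
  by (cases b; cases c) simp_all

definition ha_pair :: "int \<Rightarrow> nat \<Rightarrow> (hidx \<Rightarrow> 'a::field)" where
  "ha_pair i d = ha (i + int d) + ha (i - int d)"

lemma Hcarrier_ha_pair [simp]: "ha_pair i d \<in> Hcarrier"
  by (simp add: ha_pair_def)

section \<open>Linear extension from the basis\<close>

definition lin_ext :: "(hidx \<Rightarrow> hidx \<Rightarrow> 'a::field) \<Rightarrow> (hidx \<Rightarrow> 'a) \<Rightarrow> (hidx \<Rightarrow> 'a)" where
  "lin_ext g x = (\<Sum>c\<in>hsupp x. hscale (x c) (g c))"

lemma sum_hsupp_superset: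
  fixes f :: "'a::field \<Rightarrow> hidx \<Rightarrow> 'b::comm_monoid_add"
  assumes "finite T" "hsupp x \<subseteq> T" "\<And>c. f 0 c = 0"
  shows "(\<Sum>c\<in>hsupp x. f (x c) c) = (\<Sum>c\<in>T. f (x c) c)"
  using assms by (intro sum.mono_neutral_left) (auto simp: hsupp_def)

lemma lin_ext_add:
  assumes "finite (hsupp x)" "finite (hsupp y)"
  shows "lin_ext g (x + y) = lin_ext g x + lin_ext g y"
proof -
  define T where "T = hsupp x \<union> hsupp y"
  have T: "finite T" "hsupp x \<subseteq> T" "hsupp y \<subseteq> T" "hsupp (x + y) \<subseteq> T"
    using assms hsupp_add_subset[of x y] by (auto simp: T_def)
  have "lin_ext g z = (\<Sum>c\<in>T. hscale (z c) (g c))" if "hsupp z \<subseteq> T" for z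
    unfolding lin_ext_def
    by (rule sum_hsupp_superset[OF T(1) that]) (simp add: fun_eq_iff hscale_apply)
  with T show ?thesis
    by (simp add: hscale_add_left sum.distrib)
qed

lemma lin_ext_hscale: "lin_ext g (hscale c x) = hscale c (lin_ext g x)"
proof (cases "c = 0")
  case False
  then have "hsupp (hscale c x) = hsupp x"
    by (simp add: hsupp_def hscale_apply)
  then show ?thesis
    by (simp add: lin_ext_def hscale_sum hscale_hscale hscale_apply)
qed (simp add: lin_ext_def zero_fun_def[symmetric])

lemma lin_ext_uminus: "lin_ext g (- x) = - lin_ext g x"
  using lin_ext_hscale[of g "- 1" x] by (simp add: hscale_minus_one)

lemma lin_ext_diff:
  "finite (hsupp x) \<Longrightarrow> finite (hsupp y) \<Longrightarrow> lin_ext g (x - y) = lin_ext g x - lin_ext g y"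
  using lin_ext_add[of x "- y" g] by (simp add: lin_ext_uminus)

lemma lin_ext_hsingle [simp]: "lin_ext g (hsingle b) = g b"
  by (simp add: lin_ext_def hsingle_apply)

lemma lin_ext_hsingle_self:
  assumes "finite (hsupp x)"
  shows "lin_ext hsingle x = x"
proof
  fix b
  have "lin_ext hsingle x b = (\<Sum>c\<in>hsupp x. if b = c then x c else 0)"
    by (simp add: lin_ext_def sum_apply hsingle_apply hscale_apply if_distrib cong: if_cong)
  also have "\<dots> = x b"
    using assms by (simp add: hsupp_def)
  finally show "lin_ext hsingle x b = x b" .
qed

lemma finite_hsupp_lin_ext [simp]:
  "(\<And>c. finite (hsupp (g c))) \<Longrightarrow> finite (hsupp (lin_ext g x))"
  unfolding lin_ext_def by (intro finite_hsupp_sum finite_hsupp_hscale)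

lemma Hcarrier_lin_ext: "(\<And>c. c \<in> hsupp x \<Longrightarrow> g c \<in> Hcarrier) \<Longrightarrow> lin_ext g x \<in> Hcarrier"
  unfolding lin_ext_def by (intro Hcarrier_sum Hcarrier_hscale)

lemma lin_ext_map:
  fixes F :: "(hidx \<Rightarrow> 'a::field) \<Rightarrow> 'b::ab_group_add"
  assumes add: "\<And>u v. finite (hsupp u) \<Longrightarrow> finite (hsupp v) \<Longrightarrow> F (u + v) = F u + F v"
    and scale: "\<And>c u. finite (hsupp u) \<Longrightarrow> F (hscale c u) = s c (F u)"
    and fin: "\<And>c. finite (hsupp (g c))"
  shows "F (lin_ext g x) = (\<Sum>c\<in>hsupp x. s (x c) (F (g c)))"
proof -
  have F0: "F 0 = 0"
    using add[of 0 0] by simp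
  have "F (\<Sum>c\<in>S. hscale (x c) (g c)) = (\<Sum>c\<in>S. s (x c) (F (g c)))" for S
  proof (induction S rule: infinite_finite_induct)
    case (insert c S)
    have "F (\<Sum>c\<in>insert c S. hscale (x c) (g c))
        = F (hscale (x c) (g c)) + F (\<Sum>c\<in>S. hscale (x c) (g c))"
      using insert.hyps by (simp add: add fin finite_hsupp_sum)
    also have "\<dots> = s (x c) (F (g c)) + (\<Sum>c\<in>S. s (x c) (F (g c)))"
      by (simp add: scale fin insert.IH)
    also have "\<dots> = (\<Sum>c\<in>insert c S. s (x c) (F (g c)))"
      using insert.hyps by simp
    finally show ?case .
  next
    case empty
    show ?case using F0 by (simp only: sum.empty)
  next
    case (infinite S)
    show ?case using F0 by (simp only: sum.infinite[OF infinite] sum.empty)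
  qed
  then show ?thesis
    by (simp add: lin_ext_def)
qed

lemma hmul_eq_lin_ext: "hmul x y = lin_ext (\<lambda>b. lin_ext (hmb b) y) x"
  by (simp add: hmul_def lin_ext_def hscale_sum hscale_hscale)

lemma Hcarrier_hmul [simp]: "hmul x y \<in> Hcarrier"
  unfolding hmul_eq_lin_ext by (intro Hcarrier_lin_ext) simp

section \<open>Multiplication by an axis\<close>

definition axis_mult :: "int \<Rightarrow> (hidx \<Rightarrow> 'a::field) \<Rightarrow> (hidx \<Rightarrow> 'a)" where
  "axis_mult i = lin_ext (hmb (HA i))"

lemma hmul_ha_left: "hmul (ha i) x = axis_mult i x"
  by (simp add: hmul_eq_lin_ext ha_def axis_mult_def)

lemma Hcarrier_axis_mult [simp]: "axis_mult i x \<in> Hcarrier"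
  by (metis Hcarrier_hmul hmul_ha_left)

lemma axis_mult_zero [simp]: "axis_mult i 0 = 0"
  by (simp add: axis_mult_def lin_ext_def)

lemma axis_mult_hsingle: "axis_mult i (hsingle b) = hmb (HA i) b"
  by (simp only: axis_mult_def lin_ext_hsingle)

lemma axis_mult_add:
  "finite (hsupp x) \<Longrightarrow> finite (hsupp y) \<Longrightarrow> axis_mult i (x + y) = axis_mult i x + axis_mult i y"
  by (simp add: axis_mult_def lin_ext_add)

lemma axis_mult_diff:
  "finite (hsupp x) \<Longrightarrow> finite (hsupp y) \<Longrightarrow> axis_mult i (x - y) = axis_mult i x - axis_mult i y"
  by (simp add: axis_mult_def lin_ext_diff)

lemma axis_mult_hscale: "axis_mult i (hscale c x) = hscale c (axis_mult i x)"
  by (simp add: axis_mult_def lin_ext_hscale)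

lemma axis_mult_uminus: "axis_mult i (- x) = - axis_mult i x"
  by (simp add: axis_mult_def lin_ext_uminus)

lemma axis_mult_ha:
  "axis_mult i (ha j) = hscale (1/2) (ha i + ha j) + hs (nat \<bar>i - j\<bar>) + hz i (nat \<bar>i - j\<bar>)"
  by (simp add: axis_mult_hsingle ha_def)

lemma axis_mult_hs:
  assumes "(2::'a::field) \<noteq> 0"
  shows "axis_mult i (hs j :: hidx \<Rightarrow> 'a) =
    hscale (-3/4) (ha i) + hscale (3/8) (ha_pair i j) + hscale (3/2) (hs j) - hz i j"
proof (cases "j = 0")
  case True
  with assms show ?thesis
    by (simp add: fun_eq_iff hscale_apply axis_mult_def lin_ext_def ha_pair_def field_simps
        numeral_Bit0_eq_zero_iff)
qed (simp add: axis_mult_hsingle hs_def ha_pair_def add.commute)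

lemma axis_mult_hp_pidx:
  "axis_mult i (hp (pidx t) k :: hidx \<Rightarrow> 'a::field) =
    hscale (3/2) (hp (pidx t) k) - hp (- (i + pidx t)) k"
proof (cases "k \<ge> 1 \<and> 3 dvd k")
  case True
  then have "hp (pidx t) k = (hsingle (HP t k) :: hidx \<Rightarrow> 'a)"
    by (simp add: hp_def pidx_def)
  then have "axis_mult i (hp (pidx t) k) = (hmb (HA i) (HP t k) :: hidx \<Rightarrow> 'a)"
    by (simp only: axis_mult_hsingle)
  then show ?thesis
    by (simp only: hmb.simps)
next
  case False
  then have "hp r k = (0 :: hidx \<Rightarrow> 'a)" for r
    by (auto simp: hp_def)
  then show ?thesis
    by simp
qed

lemma axis_mult_hp:
  "axis_mult i (hp r k :: hidx \<Rightarrow> 'a::field) = hscale (3/2) (hp r k) - hp (- (i + r)) k"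
proof (cases "r mod 3 = 0")
  case False
  then have "r mod 3 = 1 \<or> r mod 3 = 2"
    by arith
  moreover define t where "t = (r mod 3 = 2)"
  ultimately have r: "r mod 3 = pidx t mod 3"
    by (auto simp: pidx_def)
  then have "(- (i + r)) mod 3 = (- (i + pidx t)) mod 3"
    by (metis mod_add_right_eq mod_minus_eq)
  then have "hp (- (i + r)) k = (hp (- (i + pidx t)) k :: hidx \<Rightarrow> 'a)"
    by (rule hp_cong)
  moreover from r have "hp r k = (hp (pidx t) k :: hidx \<Rightarrow> 'a)"
    by (rule hp_cong)
  ultimately show ?thesis
    by (simp add: axis_mult_hp_pidx)
next
  case True
  have "(r + 1) mod 3 = pidx False mod 3" "(r + 2) mod 3 = pidx True mod 3"
    "(- (i + r) + 1) mod 3 = - (i + pidx True) mod 3"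
    "(- (i + r) + 2) mod 3 = - (i + pidx False) mod 3"
    using True by (simp_all add: pidx_def) presburger+
  then have split: "hp r k = - hp (pidx False) k - (hp (pidx True) k :: hidx \<Rightarrow> 'a)"
    "hp (- (i + r)) k = - hp (- (i + pidx False)) k - (hp (- (i + pidx True)) k :: hidx \<Rightarrow> 'a)"
    using hp_eq_neg_sum[of r k] hp_eq_neg_sum[of "- (i + r)" k] hp_cong
    by (metis diff_conv_add_uminus add.commute)+
  have "axis_mult i (hp r k :: hidx \<Rightarrow> 'a) =
      - axis_mult i (hp (pidx False) k) - axis_mult i (hp (pidx True) k)"
    unfolding split(1) by (simp add: axis_mult_diff axis_mult_uminus)
  then show ?thesis
    unfolding split axis_mult_hp_pidx by (simp add: fun_eq_iff hscale_apply algebra_simps)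
qed

lemma axis_mult_hz:
  assumes "(2::'a::field) \<noteq> 0"
  shows "axis_mult i (hz i d :: hidx \<Rightarrow> 'a) = hscale (5/2) (hz i d)"
proof -
  have "hp (- (i + (i + 1))) d = (hp (i - 1) d :: hidx \<Rightarrow> 'a)"
    "hp (- (i + (i - 1))) d = (hp (i + 1) d :: hidx \<Rightarrow> 'a)"
    by (intro hp_cong; presburger)+
  with assms show ?thesis
    by (simp add: hz_def axis_mult_diff axis_mult_hp fun_eq_iff hscale_apply field_simps
        numeral_Bit0_eq_zero_iff)
qed

lemma axis_mult_ha_self:
  assumes "(2::'a::field) \<noteq> 0"
  shows "axis_mult i (ha i :: hidx \<Rightarrow> 'a) = ha i"
  using assms
  by (simp add: axis_mult_ha fun_eq_iff hscale_apply field_simps numeral_Bit0_eq_zero_iff)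

lemma axis_mult_ha_reflect:
  "axis_mult i (ha j - ha (2 * i - j) :: hidx \<Rightarrow> 'a::field) = hscale (1/2) (ha j - ha (2 * i - j))"
proof -
  have "nat \<bar>i - (2 * i - j)\<bar> = nat \<bar>i - j\<bar>"
    by simp
  then show ?thesis
    by (simp add: axis_mult_diff axis_mult_ha fun_eq_iff hscale_apply algebra_simps)
qed

lemma axis_mult_hp_add_reflect:
  assumes "(2::'a::field) \<noteq> 0"
  shows "axis_mult i (hp r k + hp (- (i + r)) k :: hidx \<Rightarrow> 'a) =
    hscale (1/2) (hp r k + hp (- (i + r)) k)"
  using assms
  by (simp add: axis_mult_add axis_mult_hp fun_eq_iff hscale_apply field_simps
      numeral_Bit0_eq_zero_iff)

lemma axis_mult_hp_diff_reflect:
  assumes "(2::'a::field) \<noteq> 0"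
  shows "axis_mult i (hp r k - hp (- (i + r)) k :: hidx \<Rightarrow> 'a) =
    hscale (5/2) (hp r k - hp (- (i + r)) k)"
  using assms
  by (simp add: axis_mult_diff axis_mult_hp fun_eq_iff hscale_apply field_simps
      numeral_Bit0_eq_zero_iff)

text \<open>Multiplication by \<open>a\<^sub>i\<close> preserves the span of \<open>a\<^sub>i\<close>, \<open>a\<^sub>i\<^sub>+\<^sub>d + a\<^sub>i\<^sub>-\<^sub>d\<close>, \<open>s\<^sub>d\<close> and
  \<open>z\<^sub>i\<^sub>,\<^sub>d\<close>, acting there with eigenvalues \<open>1, 0, 2, 5/2\<close>; these are the eigenvectors for
  \<open>0\<close> and \<open>2\<close>.\<close>

definition axis_eigvec0 :: "int \<Rightarrow> nat \<Rightarrow> (hidx \<Rightarrow> 'a::field)" where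
  "axis_eigvec0 i d = hscale 3 (ha_pair i d) - hscale 4 (hs d) - hscale 6 (ha i)
    - hscale 4 (hz i d)"

definition axis_eigvec2 :: "int \<Rightarrow> nat \<Rightarrow> (hidx \<Rightarrow> 'a::field)" where
  "axis_eigvec2 i d = ha_pair i d + hscale 4 (hs d) - hscale 2 (ha i)
    + hscale 4 (hz i d)"

lemma Hcarrier_axis_eigvec0 [simp]: "axis_eigvec0 i d \<in> Hcarrier"
  by (simp add: axis_eigvec0_def)

lemma Hcarrier_axis_eigvec2 [simp]: "axis_eigvec2 i d \<in> Hcarrier"
  by (simp add: axis_eigvec2_def)

lemma axis_mult_ha_pair:
  assumes "(2::'a::field) \<noteq> 0"
  shows "axis_mult i (ha_pair i d :: hidx \<Rightarrow> 'a) =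
    ha i + hscale (1/2) (ha_pair i d) + hscale 2 (hs d) + hscale 2 (hz i d)"
proof -
  have "axis_mult i (ha (i + int d) :: hidx \<Rightarrow> 'a) =
      hscale (1/2) (ha i + ha (i + int d)) + hs d + hz i d"
    "axis_mult i (ha (i - int d) :: hidx \<Rightarrow> 'a) =
      hscale (1/2) (ha i + ha (i - int d)) + hs d + hz i d"
    by (simp_all add: axis_mult_ha)
  with assms show ?thesis
    by (simp add: ha_pair_def axis_mult_add fun_eq_iff hscale_apply field_simps
        numeral_Bit0_eq_zero_iff)
qed

lemma axis_mult_axis_eigvec0:
  assumes "(2::'a::field) \<noteq> 0"
  shows "axis_mult i (axis_eigvec0 i d :: hidx \<Rightarrow> 'a) = 0"
  using assms
  by (simp add: axis_eigvec0_def axis_mult_add axis_mult_diff axis_mult_hscale axis_mult_ha_pair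
      axis_mult_hs axis_mult_ha_self axis_mult_hz fun_eq_iff hscale_apply field_simps
      numeral_Bit0_eq_zero_iff)

lemma axis_mult_axis_eigvec2:
  assumes "(2::'a::field) \<noteq> 0"
  shows "axis_mult i (axis_eigvec2 i d :: hidx \<Rightarrow> 'a) = hscale 2 (axis_eigvec2 i d)"
  using assms
  by (simp add: axis_eigvec2_def axis_mult_add axis_mult_diff axis_mult_hscale axis_mult_ha_pair
      axis_mult_hs axis_mult_ha_self axis_mult_hz fun_eq_iff hscale_apply field_simps
      numeral_Bit0_eq_zero_iff)

section \<open>The axis functional\<close>

fun axis_weight :: "hidx \<Rightarrow> 'a::field" where
  "axis_weight (HA _) = 1"
| "axis_weight (HS _) = 0"
| "axis_weight (HP _ _) = 0"

definition axis_sum :: "(hidx \<Rightarrow> 'a::field) \<Rightarrow> 'a" where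
  "axis_sum x = (\<Sum>b\<in>hsupp x. x b * axis_weight b)"

lemma axis_sum_zero [simp]: "axis_sum 0 = 0"
  by (simp add: axis_sum_def)

lemma axis_sum_add:
  assumes "finite (hsupp x)" "finite (hsupp y)"
  shows "axis_sum (x + y :: hidx \<Rightarrow> 'a::field) = axis_sum x + axis_sum y"
proof -
  define T where "T = hsupp x \<union> hsupp y"
  have T: "finite T" "hsupp x \<subseteq> T" "hsupp y \<subseteq> T" "hsupp (x + y) \<subseteq> T"
    using assms hsupp_add_subset[of x y] by (auto simp: T_def)
  have "axis_sum z = (\<Sum>b\<in>T. z b * axis_weight b)" if "hsupp z \<subseteq> T" for z :: "hidx \<Rightarrow> 'a"
    unfolding axis_sum_def by (rule sum_hsupp_superset[OF T(1) that]) simp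
  with T show ?thesis
    by (simp add: distrib_right sum.distrib)
qed

lemma axis_sum_hscale: "axis_sum (hscale c x) = c * axis_sum x"
proof (cases "c = 0")
  case False
  then have "hsupp (hscale c x) = hsupp x"
    by (simp add: hsupp_def hscale_apply)
  then show ?thesis
    by (simp add: axis_sum_def hscale_apply sum_distrib_left mult.assoc)
qed (simp add: axis_sum_def)

lemma axis_sum_uminus: "axis_sum (- x) = - axis_sum x"
  using axis_sum_hscale[of "- 1" x] by (simp add: hscale_minus_one)

lemma axis_sum_diff:
  "finite (hsupp x) \<Longrightarrow> finite (hsupp y) \<Longrightarrow> axis_sum (x - y) = axis_sum x - axis_sum y"
  using axis_sum_add[of x "- y"] by (simp add: axis_sum_uminus)

lemma axis_sum_hsingle [simp]: "axis_sum (hsingle b) = axis_weight b"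
  by (simp add: axis_sum_def hsingle_apply)

lemma axis_sum_ha [simp]: "axis_sum (ha i) = 1"
  by (simp add: ha_def)

lemma axis_sum_hs [simp]: "axis_sum (hs j) = 0"
  by (simp add: hs_def axis_sum_def)

lemma axis_sum_hp [simp]: "axis_sum (hp r k) = 0"
  by (simp add: hp_def axis_sum_diff axis_sum_uminus)

lemma axis_sum_hz [simp]: "axis_sum (hz r k) = 0"
  by (simp add: hz_def axis_sum_diff)

lemma axis_sum_hmb:
  assumes "(2::'a::field) \<noteq> 0"
  shows "axis_sum (hmb b c :: hidx \<Rightarrow> 'a) = axis_weight b * axis_weight c"
  using assms
  by (cases b; cases c)
    (simp_all add: axis_sum_add axis_sum_diff axis_sum_hscale field_simps numeral_Bit0_eq_zero_iff)

lemma axis_sum_lin_ext: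
  "(\<And>c. finite (hsupp (g c))) \<Longrightarrow> axis_sum (lin_ext g x) = (\<Sum>c\<in>hsupp x. x c * axis_sum (g c))"
  by (intro lin_ext_map axis_sum_add axis_sum_hscale)

lemma axis_sum_hmul:
  assumes "(2::'a::field) \<noteq> 0"
  shows "axis_sum (hmul x y :: hidx \<Rightarrow> 'a) = axis_sum x * axis_sum y"
proof -
  have row: "axis_sum (lin_ext (hmb b) y) = axis_weight b * axis_sum y" for b
  proof -
    have "axis_sum (lin_ext (hmb b) y) = (\<Sum>c\<in>hsupp y. y c * axis_sum (hmb b c))"
      by (simp add: axis_sum_lin_ext)
    also have "\<dots> = (\<Sum>c\<in>hsupp y. y c * (axis_weight b * axis_weight c))"
      by (simp add: axis_sum_hmb[OF assms])
    also have "\<dots> = axis_weight b * axis_sum y"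
      by (simp add: axis_sum_def sum_distrib_left ac_simps)
    finally show ?thesis .
  qed
  have "axis_sum (hmul x y) = (\<Sum>b\<in>hsupp x. x b * axis_sum (lin_ext (hmb b) y))"
    by (simp add: hmul_eq_lin_ext axis_sum_lin_ext)
  also have "\<dots> = (\<Sum>b\<in>hsupp x. x b * axis_weight b) * axis_sum y"
    by (simp add: row sum_distrib_left sum_distrib_right ac_simps)
  also have "\<dots> = axis_sum x * axis_sum y"
    by (simp add: axis_sum_def)
  finally show ?thesis .
qed

section \<open>Projection onto an axis\<close>

fun axis_mult_poly :: "int \<Rightarrow> 'a::field list \<Rightarrow> (hidx \<Rightarrow> 'a) \<Rightarrow> (hidx \<Rightarrow> 'a)" where
  "axis_mult_poly i [] x = x"
| "axis_mult_poly i (m # ms) x =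
    axis_mult i (axis_mult_poly i ms x) - hscale m (axis_mult_poly i ms x)"

lemma axis_mult_poly_eigen:
  assumes "axis_mult i v = hscale e v"
  shows "axis_mult_poly i ms v = hscale (\<Prod>m\<leftarrow>ms. e - m) v"
proof (induction ms)
  case (Cons m ms)
  show ?case
    unfolding axis_mult_poly.simps Cons.IH
    by (simp add: axis_mult_hscale assms fun_eq_iff hscale_apply algebra_simps)
qed simp

lemma finite_hsupp_axis_mult_poly [simp]:
  "finite (hsupp x) \<Longrightarrow> finite (hsupp (axis_mult_poly i ms x))"
  by (induction ms) simp_all

lemma axis_mult_poly_add:
  assumes "finite (hsupp x)" "finite (hsupp y)"
  shows "axis_mult_poly i ms (x + y) = axis_mult_poly i ms x + axis_mult_poly i ms y"
proof (induction ms)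
  case (Cons m ms)
  show ?case
    unfolding axis_mult_poly.simps Cons.IH
    using assms by (simp add: axis_mult_add hscale_add_right fun_eq_iff hscale_apply)
qed simp

lemma axis_mult_poly_hscale: "axis_mult_poly i ms (hscale c x) = hscale c (axis_mult_poly i ms x)"
proof (induction ms)
  case (Cons m ms)
  show ?case
    unfolding axis_mult_poly.simps Cons.IH
    by (simp add: axis_mult_hscale fun_eq_iff hscale_apply algebra_simps)
qed simp

text \<open>Besides \<open>a\<^sub>i\<close>, \<open>z\<^sub>i\<^sub>,\<^sub>d\<close> and the eigenvectors above, the vectors \<open>a\<^sub>j - a\<^sub>2\<^sub>i\<^sub>-\<^sub>j\<close>
  (eigenvalue \<open>1/2\<close>) and \<open>p\<^sub>r\<^sub>,\<^sub>k \<plusminus> p\<^sub>-\<^sub>(\<^sub>i\<^sub>+\<^sub>r\<^sub>)\<^sub>,\<^sub>k\<close> (eigenvalues \<open>1/2\<close>, \<open>5/2\<close>) span the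
  algebra, so this polynomial in multiplication by \<open>a\<^sub>i\<close> kills everything but the
  \<open>a\<^sub>i\<close>-component, which it multiplies by \<open>3/4\<close>.\<close>

definition axis_proj :: "int \<Rightarrow> (hidx \<Rightarrow> 'a::field) \<Rightarrow> (hidx \<Rightarrow> 'a)" where
  "axis_proj i = axis_mult_poly i [0, 2, 1/2, 5/2]"

lemma axis_proj_eigen:
  "axis_mult i v = hscale e v \<Longrightarrow> axis_proj i v = hscale (e * (e - 2) * (e - 1/2) * (e - 5/2)) v"
  unfolding axis_proj_def by (simp only: axis_mult_poly_eigen) (simp add: mult.assoc)

lemma axis_proj_add:
  "finite (hsupp x) \<Longrightarrow> finite (hsupp y) \<Longrightarrow> axis_proj i (x + y) = axis_proj i x + axis_proj i y"
  unfolding axis_proj_def by (rule axis_mult_poly_add)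

lemma axis_proj_hscale: "axis_proj i (hscale c x) = hscale c (axis_proj i x)"
  unfolding axis_proj_def by (rule axis_mult_poly_hscale)

lemma axis_proj_uminus: "axis_proj i (- x) = - axis_proj i x"
  using axis_proj_hscale[of i "- 1" x] by (simp add: hscale_minus_one)

lemma axis_proj_diff:
  "finite (hsupp x) \<Longrightarrow> finite (hsupp y) \<Longrightarrow> axis_proj i (x - y) = axis_proj i x - axis_proj i y"
  using axis_proj_add[of x "- y" i] by (simp add: axis_proj_uminus)

lemma axis_proj_ha_self:
  assumes "(2::'a::field) \<noteq> 0"
  shows "axis_proj i (ha i :: hidx \<Rightarrow> 'a) = hscale (3/4) (ha i)"
  using axis_proj_eigen[of i "ha i :: hidx \<Rightarrow> 'a" 1] axis_mult_ha_self[OF assms] assms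
  by (simp add: field_simps numeral_Bit0_eq_zero_iff)

lemma axis_proj_ha:
  assumes "(2::'a::field) \<noteq> 0"
  shows "axis_proj i (ha j :: hidx \<Rightarrow> 'a) = hscale (3/4) (ha i)"
proof -
  define d where "d = nat \<bar>i - j\<bar>"
  define r :: "hidx \<Rightarrow> 'a" where "r = ha j - ha (2 * i - j)"
  have "ha_pair i d = (ha j + ha (2 * i - j) :: hidx \<Rightarrow> 'a)"
    by (cases "j \<le> i") (simp_all add: ha_pair_def d_def add.commute)
  then have "ha j = hscale (1/2) r + hscale (1/8) (axis_eigvec0 i d + axis_eigvec2 i d) + ha i"
    using assms
    by (simp add: r_def axis_eigvec0_def axis_eigvec2_def fun_eq_iff hscale_apply field_simps
        numeral_Bit0_eq_zero_iff)
  then have "axis_proj i (ha j) =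
      axis_proj i (hscale (1/2) r + hscale (1/8) (axis_eigvec0 i d + axis_eigvec2 i d) + ha i)"
    by (rule arg_cong)
  moreover have "axis_proj i r = 0"
    unfolding r_def by (simp add: axis_proj_eigen[OF axis_mult_ha_reflect])
  moreover have "axis_proj i (axis_eigvec0 i d :: hidx \<Rightarrow> 'a) = 0"
    using axis_proj_eigen[of i "axis_eigvec0 i d :: hidx \<Rightarrow> 'a" 0]
    by (simp add: axis_mult_axis_eigvec0[OF assms])
  moreover have "axis_proj i (axis_eigvec2 i d :: hidx \<Rightarrow> 'a) = 0"
    by (simp add: axis_proj_eigen[OF axis_mult_axis_eigvec2[OF assms]])
  ultimately show ?thesis
    by (simp add: r_def axis_proj_add axis_proj_hscale axis_proj_ha_self[OF assms])
qed

lemma axis_proj_hs: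
  assumes "(2::'a::field) \<noteq> 0"
  shows "axis_proj i (hs j :: hidx \<Rightarrow> 'a) = 0"
proof -
  have "hs j =
      hscale (1/16) (hscale 3 (axis_eigvec2 i j) - axis_eigvec0 i j) - (hz i j :: hidx \<Rightarrow> 'a)"
    using assms
    by (simp add: axis_eigvec0_def axis_eigvec2_def fun_eq_iff hscale_apply field_simps
        numeral_Bit0_eq_zero_iff)
  then have "axis_proj i (hs j) =
      axis_proj i (hscale (1/16) (hscale 3 (axis_eigvec2 i j) - axis_eigvec0 i j)
        - (hz i j :: hidx \<Rightarrow> 'a))"
    by (rule arg_cong)
  also have "\<dots> = 0"
    using axis_proj_eigen[of i "axis_eigvec0 i j :: hidx \<Rightarrow> 'a" 0]
    by (simp add: axis_proj_diff axis_proj_hscale axis_mult_axis_eigvec0[OF assms]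
        axis_proj_eigen[OF axis_mult_axis_eigvec2[OF assms]]
        axis_proj_eigen[OF axis_mult_hz[OF assms]])
  finally show ?thesis .
qed

lemma axis_proj_hp:
  assumes "(2::'a::field) \<noteq> 0"
  shows "axis_proj i (hp r k :: hidx \<Rightarrow> 'a) = 0"
proof -
  define p :: "hidx \<Rightarrow> 'a" where "p = hp r k + hp (- (i + r)) k"
  define q :: "hidx \<Rightarrow> 'a" where "q = hp r k - hp (- (i + r)) k"
  have "axis_proj i p = 0" "axis_proj i q = 0"
    unfolding p_def q_def axis_proj_eigen[OF axis_mult_hp_add_reflect[OF assms]]
      axis_proj_eigen[OF axis_mult_hp_diff_reflect[OF assms]]
    by simp_all
  moreover have "p \<in> Hcarrier" "q \<in> Hcarrier"
    by (simp_all add: p_def q_def)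
  moreover have "hp r k = hscale (1/2) p + hscale (1/2) q"
    using assms
    by (simp add: p_def q_def fun_eq_iff hscale_apply field_simps numeral_Bit0_eq_zero_iff)
  ultimately show ?thesis
    by (simp add: axis_proj_add axis_proj_hscale)
qed

lemma axis_proj_hsingle:
  assumes "(2::'a::field) \<noteq> 0" "valid_idx b"
  shows "axis_proj i (hsingle b :: hidx \<Rightarrow> 'a) = hscale (3/4 * axis_weight b) (ha i)"
proof (cases b)
  case (HA j)
  then show ?thesis
    using axis_proj_ha[OF assms(1), of i j] by (simp add: ha_def)
next
  case (HS j)
  with assms(2) have "hsingle b = (hs j :: hidx \<Rightarrow> 'a)"
    by (simp add: hs_def valid_idx_def)
  with HS show ?thesis
    by (simp add: axis_proj_hs[OF assms(1)])
next
  case (HP t k)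
  with assms(2) have "hsingle b = (hp (pidx t) k :: hidx \<Rightarrow> 'a)"
    by (simp add: hp_def pidx_def valid_idx_def)
  with HP show ?thesis
    by (simp add: axis_proj_hp[OF assms(1)])
qed

lemma axis_proj_eq:
  assumes "(2::'a::field) \<noteq> 0" "x \<in> Hcarrier"
  shows "axis_proj i x = hscale (3/4 * axis_sum x) (ha i :: hidx \<Rightarrow> 'a)"
proof -
  have "axis_proj i x = axis_proj i (lin_ext hsingle x)"
    using assms(2) by (simp add: lin_ext_hsingle_self)
  also have "\<dots> = (\<Sum>c\<in>hsupp x. hscale (x c) (axis_proj i (hsingle c)))"
    by (intro lin_ext_map axis_proj_add axis_proj_hscale) simp_all
  also have "\<dots> = (\<Sum>c\<in>hsupp x. hscale (x c) (hscale (3/4 * axis_weight c) (ha i)))"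
    using assms by (intro sum.cong refl) (simp add: axis_proj_hsingle Hcarrier_iff)
  also have "\<dots> = hscale (3/4 * axis_sum x) (ha i)"
    by (simp add: axis_sum_def fun_eq_iff hscale_apply sum_apply sum_distrib_left sum_distrib_right
        algebra_simps)
  finally show ?thesis .
qed

section \<open>Ideals and the radical\<close>

lemma hideal_subset: "hideal I \<Longrightarrow> I \<subseteq> Hcarrier"
  by (simp add: hideal_def)

lemma hideal_add: "hideal I \<Longrightarrow> x \<in> I \<Longrightarrow> y \<in> I \<Longrightarrow> x + y \<in> I"
  by (simp add: hideal_def)

lemma hideal_hscale: "hideal I \<Longrightarrow> x \<in> I \<Longrightarrow> hscale c x \<in> I"
  by (simp add: hideal_def)

lemma hideal_diff: "hideal I \<Longrightarrow> x \<in> I \<Longrightarrow> y \<in> I \<Longrightarrow> x - y \<in> I"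
  using hideal_add[of I x "hscale (- 1) y"] hideal_hscale[of I y "- 1"]
  by (simp add: hscale_minus_one)

lemma hideal_hmul_left: "hideal I \<Longrightarrow> x \<in> I \<Longrightarrow> y \<in> Hcarrier \<Longrightarrow> hmul y x \<in> I"
  by (simp add: hideal_def)

lemma hideal_hscale_cancel:
  assumes "hideal I" "c \<noteq> 0" "hscale c x \<in> I"
  shows "x \<in> I"
  using hideal_hscale[OF assms(1,3), of "inverse c"] assms(2) by (simp add: hscale_hscale)

lemma hideal_lin_ext:
  assumes "hideal I" "\<And>c. c \<in> hsupp x \<Longrightarrow> g c \<in> I"
  shows "lin_ext g x \<in> I"
proof -
  have "(\<Sum>c\<in>S. hscale (x c) (g c)) \<in> I" if "S \<subseteq> hsupp x" for S
    using that
  proof (induction S rule: infinite_finite_induct)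
    case (insert c S)
    then show ?case
      unfolding sum.insert[OF insert.hyps(1,2)]
      by (intro hideal_add[OF assms(1)] hideal_hscale[OF assms(1)] assms(2) insert.IH) simp_all
  qed (use assms(1) in \<open>simp_all add: hideal_def\<close>)
  then show ?thesis
    by (simp add: lin_ext_def)
qed

lemma hideal_axis_mult: "hideal I \<Longrightarrow> x \<in> I \<Longrightarrow> axis_mult i x \<in> I"
  by (metis Hcarrier_ha hideal_hmul_left hmul_ha_left)

lemma hideal_axis_mult_poly: "hideal I \<Longrightarrow> x \<in> I \<Longrightarrow> axis_mult_poly i ms x \<in> I"
  by (induction ms) (simp_all add: hideal_diff hideal_axis_mult hideal_hscale)

lemma hideal_axis_proj: "hideal I \<Longrightarrow> x \<in> I \<Longrightarrow> axis_proj i x \<in> I"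
  unfolding axis_proj_def by (rule hideal_axis_mult_poly)

lemma hideal_ha_if_axis_sum_neq_zero:
  assumes "(2::'a::field) \<noteq> 0" "(3::'a) \<noteq> 0"
    and I: "hideal (I :: (hidx \<Rightarrow> 'a) set)" and "x \<in> I" "axis_sum x \<noteq> 0"
  shows "ha j \<in> I"
proof -
  have "axis_proj j x \<in> I"
    by (rule hideal_axis_proj[OF I \<open>x \<in> I\<close>])
  then have "hscale (3/4 * axis_sum x) (ha j) \<in> I"
    using axis_proj_eq[OF assms(1)] hideal_subset[OF I] \<open>x \<in> I\<close> by auto
  moreover have "3/4 * axis_sum x \<noteq> 0"
    using assms by (simp add: numeral_Bit0_eq_zero_iff)
  ultimately show ?thesis
    using hideal_hscale_cancel[OF I] by blast
qed

lemma hideal_eq_Hcarrier_if_basis: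
  assumes I: "hideal I" and basis: "\<And>b. valid_idx b \<Longrightarrow> hsingle b \<in> I"
  shows "I = Hcarrier"
proof -
  have "x \<in> I" if "x \<in> Hcarrier" for x
  proof -
    have "lin_ext hsingle x \<in> I"
      using that by (intro hideal_lin_ext[OF I] basis) (simp add: Hcarrier_iff)
    with that show ?thesis
      by (simp add: lin_ext_hsingle_self)
  qed
  with hideal_subset[OF I] show ?thesis
    by blast
qed

lemma hideal_hs_hz_if_all_axes:
  assumes "(3::'a::field) \<noteq> 0" and I: "hideal (I :: (hidx \<Rightarrow> 'a) set)"
    and axes: "\<And>j. ha j \<in> I"
  shows "hs d \<in> I" "hz m d \<in> I"
proof -
  have hs_hz: "hs d + hz m d \<in> I" for m
  proof -
    have "axis_mult m (ha (m + int d)) - hscale (1/2) (ha m + ha (m + int d)) \<in> I"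
      by (intro hideal_diff[OF I] hideal_axis_mult[OF I] hideal_hscale[OF I] hideal_add[OF I] axes)
    then show ?thesis
      by (simp add: axis_mult_ha)
  qed
  have "(hs d + hz 0 d) + (hs d + hz 1 d) + (hs d + hz 2 d) = hscale 3 (hs d :: hidx \<Rightarrow> 'a)"
    using hz_sum_residues[of d, where 'a = 'a] by (simp add: fun_eq_iff hscale_apply algebra_simps)
  then have "hscale 3 (hs d) \<in> I"
    by (metis hideal_add[OF I] hs_hz)
  then show hs: "hs d \<in> I"
    by (rule hideal_hscale_cancel[OF I assms(1)])
  show "hz m d \<in> I"
    using hideal_diff[OF I hs_hz[of m] hs] by simp
qed

lemma hideal_hp_if_all_hz:
  assumes "(3::'a::field) \<noteq> 0" and I: "hideal (I :: (hidx \<Rightarrow> 'a) set)"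
    and hz: "\<And>m. hz m d \<in> I"
  shows "hp 1 d \<in> I" "hp 2 d \<in> I"
proof -
  have hp_neg: "hp (- 1) d = (hp 2 d :: hidx \<Rightarrow> 'a)"
    by (rule hp_cong) simp
  have "hz 1 d - hz 0 d = hscale 3 (hp 2 d :: hidx \<Rightarrow> 'a)"
    using hp_sum_consecutive[of 0 d, where 'a = 'a] hp_neg
    by (simp add: hz_def fun_eq_iff hscale_apply algebra_simps)
  then have "hscale 3 (hp 2 d) \<in> I"
    by (metis hideal_diff[OF I] hz)
  then show hp2: "hp 2 d \<in> I"
    by (rule hideal_hscale_cancel[OF I assms(1)])
  have "hz 0 d + hp 2 d = (hp 1 d :: hidx \<Rightarrow> 'a)"
    using hp_neg by (simp add: hz_def)
  then show "hp 1 d \<in> I"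
    by (metis hideal_add[OF I] hz hp2)
qed

lemma hideal_eq_Hcarrier_if_all_axes:
  assumes "(3::'a::field) \<noteq> 0" and I: "hideal (I :: (hidx \<Rightarrow> 'a) set)"
    and axes: "\<And>j. ha j \<in> I"
  shows "I = Hcarrier"
proof (rule hideal_eq_Hcarrier_if_basis[OF I])
  note hs_hz = hideal_hs_hz_if_all_axes[OF assms]
  note hp = hideal_hp_if_all_hz[OF assms(1) I hs_hz(2)]
  fix b :: hidx
  assume valid: "valid_idx b"
  show "hsingle b \<in> I"
  proof (cases b)
    case (HA j)
    then show ?thesis
      using axes[of j] by (simp add: ha_def)
  next
    case (HS j)
    then show ?thesis
      using hs_hz(1)[of j] valid by (simp add: hs_def valid_idx_def)
  next
    case (HP t k)
    then show ?thesis
      using hp[of k] valid by (cases t) (simp_all add: hp_def valid_idx_def)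
  qed
qed

definition axis_kernel :: "(hidx \<Rightarrow> 'a::field) set" where
  "axis_kernel = {x \<in> Hcarrier. axis_sum x = 0}"

lemma proper_hideal_subset_axis_kernel:
  assumes "(2::'a::field) \<noteq> 0" "(3::'a) \<noteq> 0"
    and I: "hideal (I :: (hidx \<Rightarrow> 'a) set)" and "I \<noteq> Hcarrier"
  shows "I \<subseteq> axis_kernel"
proof
  fix x
  assume "x \<in> I"
  have "axis_sum x = 0"
  proof (rule ccontr)
    assume "axis_sum x \<noteq> 0"
    with assms \<open>x \<in> I\<close> have "I = Hcarrier"
      by (intro hideal_eq_Hcarrier_if_all_axes hideal_ha_if_axis_sum_neq_zero) auto
    with assms(4) show False ..
  qed
  with \<open>x \<in> I\<close> hideal_subset[OF I] show "x \<in> axis_kernel"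
    by (auto simp: axis_kernel_def)
qed

lemma ha_notin_axis_kernel: "ha i \<notin> axis_kernel"
  by (simp add: axis_kernel_def)

lemma hideal_axis_kernel:
  assumes "(2::'a::field) \<noteq> 0"
  shows "hideal (axis_kernel :: (hidx \<Rightarrow> 'a) set)"
  using assms
  by (auto simp: hideal_def axis_kernel_def axis_sum_add axis_sum_hscale axis_sum_hmul)

lemma hradical_eq_axis_kernel:
  assumes "(2::'a::field) \<noteq> 0" "(3::'a) \<noteq> 0"
  shows "(hradical :: (hidx \<Rightarrow> 'a) set) = axis_kernel"
proof -
  let ?K = "axis_kernel :: (hidx \<Rightarrow> 'a) set"
  let ?maximal = "\<lambda>R. hideal R \<and> (\<forall>i. ha i \<notin> R) \<and> (\<forall>J. hideal J \<and> (\<forall>i. ha i \<notin> J) \<longrightarrow> J \<subseteq> R)"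
  have above: "J \<subseteq> ?K" if "hideal J" "\<forall>i. ha i \<notin> J" for J
    using that Hcarrier_ha by (intro proper_hideal_subset_axis_kernel[OF assms]) auto
  have "?maximal ?K"
    using hideal_axis_kernel[OF assms(1)] ha_notin_axis_kernel above by blast
  moreover have "R = ?K" if "?maximal R" for R
    using that above \<open>?maximal ?K\<close> by (meson subset_antisym)
  ultimately show ?thesis
    unfolding hradical_def by (rule the_equality)
qed

theorem corollary5p3:
  fixes I :: "(hidx \<Rightarrow> 'a::field) set"
  assumes char2: "(2::'a) \<noteq> 0"
    and char3: "(3::'a) \<noteq> 0"
    and ideal: "hideal I"
    and proper: "I \<noteq> Hcarrier"
  shows "I \<subseteq> (hradical :: (hidx \<Rightarrow> 'a) set) \<and> (\<forall>i. ha i \<notin> I)"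
proof -
  have "I \<subseteq> axis_kernel"
    by (rule proper_hideal_subset_axis_kernel[OF char2 char3 ideal proper])
  then show ?thesis
    using hradical_eq_axis_kernel[OF char2 char3] ha_notin_axis_kernel by blast
qed

end
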